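(* Let $n\ge 3$, let $F$ be a set of edges of $Q_n$, and let $T$ be a proper subset of the vertex set of $Q_n$ with $|T|\ge 3$ and $|T|_0\ge|T|_1$, such that every edge of $Q_n$ joining a vertex of parity 0 in $T$ to a vertex outside $T$ belongs to $F$. If the subgraph of $Q_n$ induced by $T$ has a vertex of degree 1, then either $F$ is not minimal, or there is a proper subset $T'\subsetneq T$ which is disconnected halfway with respect to the same set $F$.
   Context: $Q_n$ is the $n$-dimensional hypercube on the binary strings of length $n$, two strings adjacent iff they differ in exactly one bit. The parity of a vertex is the number of ones in its label modulo 2. For a set $T$ of vertices, $|T|_0$ and $|T|_1$ denote the numbers of vertices of parity 0 and parity 1 in $T$. $F$ is a set of "faulty" edges; $Q_n-F$ is the graph with all vertices of $Q_n$ and the edges of $Q_n$ not in $F$. "$F$ is not minimal" means that there is a proper subset $F'\subsetneq F$ such that $Q_n-F'$ has no Hamiltonian cycle. A nonempty proper subset $T$ of the vertices of $Q_n$ is disconnected halfway (with respect to $F$) if either (1) $|T|_0\ge |T|_1$ and every edge joining a vertex of parity 0 in $T$ to a vertex outside $T$ is in $F$, or (2) $|T|_1\ge |T|_0$ and every edge joining a vertex of parity 1 in $T$ to a vertex outside $T$ is in $F$. *)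

theory Defs
  imports Main
begin

definition hvert :: "nat \<Rightarrow> bool list set" where
  "hvert n = {xs. length xs = n}"

definition hadj :: "bool list \<Rightarrow> bool list \<Rightarrow> bool" where
  "hadj u v \<longleftrightarrow> length u = length v \<and> card {i. i < length u \<and> u ! i \<noteq> v ! i} = 1"

definition hedges :: "nat \<Rightarrow> bool list set set" where
  "hedges n = {{u, v} | u v. u \<in> hvert n \<and> v \<in> hvert n \<and> hadj u v}"

definition parity :: "bool list \<Rightarrow> nat" where
  "parity v = count_list v True mod 2"

definition card0 :: "bool list set \<Rightarrow> nat" where
  "card0 T = card {v \<in> T. parity v = 0}"

definition card1 :: "bool list set \<Rightarrow> nat" where
  "card1 T = card {v \<in> T. parity v = 1}"

definition ham_cycle :: "nat \<Rightarrow> bool list set set \<Rightarrow> bool list list \<Rightarrow> bool" where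
  "ham_cycle n F cs \<longleftrightarrow> distinct cs \<and> set cs = hvert n \<and> length cs \<ge> 3 \<and>
     (\<forall>i < length cs. hadj (cs ! i) (cs ! ((i + 1) mod length cs)) \<and>
                      {cs ! i, cs ! ((i + 1) mod length cs)} \<notin> F)"

definition has_ham_cycle :: "nat \<Rightarrow> bool list set set \<Rightarrow> bool" where
  "has_ham_cycle n F \<longleftrightarrow> (\<exists>cs. ham_cycle n F cs)"

definition not_minimal :: "nat \<Rightarrow> bool list set set \<Rightarrow> bool" where
  "not_minimal n F \<longleftrightarrow> (\<exists>F'. F' \<subset> F \<and> \<not> has_ham_cycle n F')"

definition disc_halfway :: "nat \<Rightarrow> bool list set set \<Rightarrow> bool list set \<Rightarrow> bool" where
  "disc_halfway n F T \<longleftrightarrow> T \<noteq> {} \<and> T \<subset> hvert n \<and>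
     ((card0 T \<ge> card1 T \<and>
        (\<forall>u v. u \<in> T \<and> parity u = 0 \<and> v \<in> hvert n - T \<and> hadj u v \<longrightarrow> {u, v} \<in> F)) \<or>
      (card1 T \<ge> card0 T \<and>
        (\<forall>u v. u \<in> T \<and> parity u = 1 \<and> v \<in> hvert n - T \<and> hadj u v \<longrightarrow> {u, v} \<in> F)))"

end

theory Submission
  imports Defs
begin

text \<open>A pendant vertex \<open>v\<close> of \<open>T\<close> with unique neighbour \<open>w\<close> in \<open>T\<close> always yields a smaller
  set disconnected halfway, since adjacent vertices have different parity. If \<open>v\<close> is even,
  its only fault-free edge leaving \<open>{v, w}\<close> could go to \<open>w\<close>, so \<open>{v, w}\<close> is disconnected
  halfway. If \<open>v\<close> is odd, removing \<open>v\<close> and \<open>w\<close> keeps \<open>|T|\<^sub>0 \<ge> |T|\<^sub>1\<close>, and no even vertex of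
  \<open>T - {v, w}\<close> is adjacent to \<open>v\<close> (its only neighbour in \<open>T\<close> is \<open>w\<close>) or to the even \<open>w\<close>; so
  \<open>T - {v, w}\<close> is disconnected halfway, nonempty because \<open>|T| \<ge> 3\<close>.
  Thus the second alternative always holds.\<close>

lemma hadj_sym: "hadj u v \<Longrightarrow> hadj v u"
  unfolding hadj_def by (auto simp: eq_commute)

lemma hadj_irrefl: "\<not> hadj u u"
  unfolding hadj_def by simp

lemma hadj_imp_flip:
  assumes "hadj u v"
  obtains i where "i < length u" "v = u[i := \<not> u ! i]"
proof -
  have len: "length u = length v" and one: "card {i. i < length u \<and> u ! i \<noteq> v ! i} = 1"
    using assms unfolding hadj_def by auto
  obtain i where diff: "{i. i < length u \<and> u ! i \<noteq> v ! i} = {i}"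
    using card_1_singletonE[OF one] by blast
  then have "i < length u" by auto
  moreover have "v = u[i := \<not> u ! i]"
  proof (rule nth_equalityI)
    fix j assume "j < length v"
    then show "v ! j = u[i := \<not> u ! i] ! j"
      using diff len by (cases "j = i") auto
  qed (use len in simp)
  ultimately show thesis by (rule that)
qed

lemma even_count_flip:
  "i < length u \<Longrightarrow> even (count_list (u[i := \<not> u ! i]) True) \<longleftrightarrow> odd (count_list u True)"
proof (induction u arbitrary: i)
  case Nil then show ?case by simp
next
  case (Cons x u) then show ?case by (cases i) auto
qed

lemma hadj_parity:
  assumes "hadj u v"
  shows "parity u \<noteq> parity v"
proof -
  obtain i where "i < length u" "v = u[i := \<not> u ! i]"
    using assms by (rule hadj_imp_flip)
  then have "even (count_list v True) \<longleftrightarrow> odd (count_list u True)"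
    by (simp add: even_count_flip)
  then show ?thesis
    unfolding parity_def by presburger
qed

lemma parity_cases: "parity u = 0 \<or> parity u = 1"
  unfolding parity_def by auto

lemma finite_hvert: "finite (hvert n)"
  unfolding hvert_def by (rule finite_list_length)

lemma disc_halfway_pendant_even:
  assumes "T \<subset> hvert n" and "v \<in> T" and "parity v = 0"
    and pendant: "{x \<in> T. hadj v x} = {w}"
    and faulty: "\<forall>u x. u \<in> T \<and> parity u = 0 \<and> x \<in> hvert n - T \<and> hadj u x \<longrightarrow> {u, x} \<in> F"
  shows "disc_halfway n F {v, w}"
proof -
  have "w \<in> T" and "hadj v w" using pendant by auto
  then have "parity w = 1"
    using \<open>parity v = 0\<close> hadj_parity parity_cases by metis
  then have "{x \<in> {v, w}. parity x = 0} = {v}" "{x \<in> {v, w}. parity x = 1} = {w}"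
    using \<open>parity v = 0\<close> by auto
  then have "card1 {v, w} \<le> card0 {v, w}" unfolding card0_def card1_def by simp
  moreover have "{u, x} \<in> F"
    if "u \<in> {v, w}" "parity u = 0" "x \<in> hvert n - {v, w}" "hadj u x" for u x
  proof -
    have "u = v" using that \<open>parity w = 1\<close> by auto
    then have "x \<notin> T" using that pendant by blast
    then show ?thesis using that faulty \<open>u = v\<close> \<open>v \<in> T\<close> by blast
  qed
  moreover have "{v, w} \<subseteq> T" using \<open>v \<in> T\<close> \<open>w \<in> T\<close> by simp
  then have "{v, w} \<subset> hvert n" using assms(1) by (rule subset_psubset_trans)
  ultimately show ?thesis
    unfolding disc_halfway_def by blast
qed

lemma disc_halfway_pendant_odd:
  assumes "T \<subset> hvert n" and "card T \<ge> 3" and "card1 T \<le> card0 T"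
    and "v \<in> T" and "parity v = 1"
    and pendant: "{x \<in> T. hadj v x} = {w}"
    and faulty: "\<forall>u x. u \<in> T \<and> parity u = 0 \<and> x \<in> hvert n - T \<and> hadj u x \<longrightarrow> {u, x} \<in> F"
  shows "disc_halfway n F (T - {v, w})"
proof -
  have "finite T" using assms(1) finite_hvert by (meson finite_subset psubset_imp_subset)
  have "w \<in> T" and "hadj v w" using pendant by auto
  then have "parity w = 0"
    using \<open>parity v = 1\<close> hadj_parity parity_cases by metis
  have "T - {v, w} \<noteq> {}"
  proof
    assume "T - {v, w} = {}"
    then have "card T \<le> card {v, w}" by (intro card_mono) auto
    also have "\<dots> \<le> 2" by (rule card_insert_le_m1) simp_all
    finally show False using \<open>card T \<ge> 3\<close> by simp
  qed
  moreover have "{x \<in> T - {v, w}. parity x = 0} = {x \<in> T. parity x = 0} - {w}"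
    and "{x \<in> T - {v, w}. parity x = 1} = {x \<in> T. parity x = 1} - {v}"
    using \<open>parity v = 1\<close> \<open>parity w = 0\<close> by auto
  then have "card0 (T - {v, w}) = card0 T - 1" and "card1 (T - {v, w}) = card1 T - 1"
    unfolding card0_def card1_def
    using \<open>finite T\<close> \<open>v \<in> T\<close> \<open>w \<in> T\<close> \<open>parity v = 1\<close> \<open>parity w = 0\<close>
    by (simp_all add: card_Diff_singleton)
  then have "card1 (T - {v, w}) \<le> card0 (T - {v, w})" using assms(3) by simp
  moreover have "{u, x} \<in> F"
    if "u \<in> T - {v, w}" "parity u = 0" "x \<in> hvert n - (T - {v, w})" "hadj u x" for u x
  proof -
    have "x \<noteq> w" using \<open>parity u = 0\<close> \<open>parity w = 0\<close> \<open>hadj u x\<close> hadj_parity by metis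
    moreover have "x \<noteq> v"
    proof
      assume "x = v"
      then have "u \<in> {x \<in> T. hadj v x}" using that hadj_sym by auto
      then show False using pendant that by auto
    qed
    ultimately have "x \<notin> T" using that by auto
    then show ?thesis using that faulty by auto
  qed
  moreover have "T - {v, w} \<subset> hvert n"
    by (rule subset_psubset_trans[OF _ assms(1)]) blast
  ultimately show ?thesis
    unfolding disc_halfway_def by blast
qed

theorem lemma4:
  fixes n :: nat and F :: "bool list set set" and T :: "bool list set"
  assumes "n \<ge> 3"
    and "F \<subseteq> hedges n"
    and "T \<subset> hvert n"
    and "card T \<ge> 3"
    and "card0 T \<ge> card1 T"
    and "\<forall>u v. u \<in> T \<and> parity u = 0 \<and> v \<in> hvert n - T \<and> hadj u v \<longrightarrow> {u, v} \<in> F"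
    and "\<exists>v \<in> T. card {w \<in> T. hadj v w} = 1"
  shows "not_minimal n F \<or> (\<exists>T'. T' \<subset> T \<and> disc_halfway n F T')"
proof -
  obtain v where "v \<in> T" and degree: "card {w \<in> T. hadj v w} = 1" using assms(7) by blast
  obtain w where pendant: "{x \<in> T. hadj v x} = {w}" using card_1_singletonE[OF degree] by blast
  then have "w \<in> T" and "v \<noteq> w" using hadj_irrefl by auto
  consider "parity v = 0" | "parity v = 1" using parity_cases[of v] by auto
  then show ?thesis
  proof cases
    case 1
    have "card {v, w} < card T" using \<open>v \<noteq> w\<close> assms(4) by simp
    then have "{v, w} \<noteq> T" by auto
    then have "{v, w} \<subset> T" using \<open>v \<in> T\<close> \<open>w \<in> T\<close> by auto
    with disc_halfway_pendant_even[OF assms(3) \<open>v \<in> T\<close> 1 pendant assms(6)] show ?thesis by blast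
  next
    case 2
    have "T - {v, w} \<subset> T" using \<open>v \<in> T\<close> by auto
    with disc_halfway_pendant_odd[OF assms(3-5) \<open>v \<in> T\<close> 2 pendant assms(6)] show ?thesis by blast
  qed
qed

end
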